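(* There exists a simple bi-partite graph $K$ such that $\mathcal{D}(d_K^{1/2}(Q))\subsetneq\mathcal{D}(\Delta_K^{1/2})$. In particular, for this $K$ there are no $a\in(0,1)$ and $C\ge0$ such that $(1-a)\langle f,d_K(Q)f\rangle-C\|f\|^2\le\langle f,\Delta_Kf\rangle\le(1+a)\langle f,d_K(Q)f\rangle+C\|f\|^2$ for all finitely supported $f$.
   Context: A simple graph $K=(\mathscr{V},\mathscr{E})$ has a countable vertex set $\mathscr{V}$, symmetric edge weights $\mathscr{E}:\mathscr{V}\times\mathscr{V}\to\{0,1\}$, zero magnetic phase and vertex weight $m\equiv1$; it is assumed locally finite, connected and without loops. Bi-partite: $\mathscr{V}$ splits into two subsets with no neighbors inside either subset. $\Delta_K$ is the Friedrichs extension in $\ell^2(\mathscr{V})$ of the form $\frac12\sum_{x,y}\mathscr{E}(x,y)|f(x)-f(y)|^2$ on finitely supported functions; $d_K(x)=\sum_y\mathscr{E}(x,y)$ and $d_K(Q)$ is multiplication by it. *)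

theory Defs
  imports "HOL-Analysis.Analysis"
begin

text \<open>Simple graphs on a vertex set V of natural numbers (every countable graph is
isomorphic to one of these). Edge weight E x y = True means edge weight 1.\<close>

definition simple_graph :: "nat set \<Rightarrow> (nat \<Rightarrow> nat \<Rightarrow> bool) \<Rightarrow> bool" where
  "simple_graph V E \<longleftrightarrow>
     V \<noteq> {} \<and>
     (\<forall>x y. E x y \<longrightarrow> x \<in> V \<and> y \<in> V) \<and>
     (\<forall>x y. E x y \<longleftrightarrow> E y x) \<and>
     (\<forall>x. \<not> E x x) \<and>
     (\<forall>x\<in>V. finite {y. E x y}) \<and>
     (\<forall>x\<in>V. \<forall>y\<in>V. (x, y) \<in> {(u, v). E u v}\<^sup>*)"

definition bipartite :: "nat set \<Rightarrow> (nat \<Rightarrow> nat \<Rightarrow> bool) \<Rightarrow> bool" where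
  "bipartite V E \<longleftrightarrow>
     (\<exists>A B. A \<union> B = V \<and> A \<inter> B = {} \<and>
        (\<forall>x y. E x y \<longrightarrow> \<not> (x \<in> A \<and> y \<in> A) \<and> \<not> (x \<in> B \<and> y \<in> B)))"

definition deg :: "(nat \<Rightarrow> nat \<Rightarrow> bool) \<Rightarrow> nat \<Rightarrow> nat" where
  "deg E x = card {y. E x y}"

definition l2 :: "nat set \<Rightarrow> (nat \<Rightarrow> complex) \<Rightarrow> bool" where
  "l2 V f \<longleftrightarrow> (\<forall>x. x \<notin> V \<longrightarrow> f x = 0) \<and> (\<lambda>x. (cmod (f x))\<^sup>2) summable_on V"

definition fin_supp :: "nat set \<Rightarrow> (nat \<Rightarrow> complex) \<Rightarrow> bool" where
  "fin_supp V f \<longleftrightarrow> finite {x. f x \<noteq> 0} \<and> (\<forall>x. x \<notin> V \<longrightarrow> f x = 0)"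

definition l2norm_sq :: "nat set \<Rightarrow> (nat \<Rightarrow> complex) \<Rightarrow> ennreal" where
  "l2norm_sq V f = (\<Sum>\<^sub>\<infinity>x\<in>V. ennreal ((cmod (f x))\<^sup>2))"

definition qform :: "(nat \<Rightarrow> nat \<Rightarrow> bool) \<Rightarrow> (nat \<Rightarrow> complex) \<Rightarrow> ennreal" where
  "qform E f = (\<Sum>\<^sub>\<infinity>p\<in>{(x, y). E x y}. ennreal ((cmod (f (fst p) - f (snd p)))\<^sup>2)) / 2"

text \<open>Domain of \<open>\<Delta>\<^sub>K\<^sup>1\<^sup>/\<^sup>2\<close> for the Friedrichs extension: the form domain of the closure
of Q restricted to finitely supported functions, i.e. the completion of the finitely
supported functions in the norm \<open>(\<parallel>f\<parallel>\<^sup>2 + Q(f))\<^sup>1\<^sup>/\<^sup>2\<close>, realised inside \<open>\<ell>\<^sup>2(V)\<close>.\<close>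
definition lap_sqrt_dom :: "nat set \<Rightarrow> (nat \<Rightarrow> nat \<Rightarrow> bool) \<Rightarrow> (nat \<Rightarrow> complex) set" where
  "lap_sqrt_dom V E = {f. l2 V f \<and> qform E f < \<infinity> \<and>
      (\<exists>g. (\<forall>n. fin_supp V (g n)) \<and>
           ((\<lambda>n. l2norm_sq V (g n - f)) \<longlongrightarrow> 0) sequentially \<and>
           ((\<lambda>n. qform E (g n - f)) \<longlongrightarrow> 0) sequentially)}"

text \<open>Domain of \<open>d\<^sub>K\<^sup>1\<^sup>/\<^sup>2(Q)\<close> (maximal multiplication operator).\<close>
definition deg_sqrt_dom :: "nat set \<Rightarrow> (nat \<Rightarrow> nat \<Rightarrow> bool) \<Rightarrow> (nat \<Rightarrow> complex) set" where
  "deg_sqrt_dom V E = {f. l2 V f \<and>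
      (\<Sum>\<^sub>\<infinity>x\<in>V. ennreal (real (deg E x) * (cmod (f x))\<^sup>2)) < \<infinity>}"

definition lap :: "(nat \<Rightarrow> nat \<Rightarrow> bool) \<Rightarrow> (nat \<Rightarrow> complex) \<Rightarrow> nat \<Rightarrow> complex" where
  "lap E f x = (\<Sum>y\<in>{y. E x y}. f x - f y)"

text \<open>\<open>\<ell>\<^sup>2\<close> inner product \<open>\<langle>f, g\<rangle>\<close> (antilinear in the first slot), for finitely supported f.\<close>
definition inner_fs :: "nat set \<Rightarrow> (nat \<Rightarrow> complex) \<Rightarrow> (nat \<Rightarrow> complex) \<Rightarrow> complex" where
  "inner_fs V f g = (\<Sum>x\<in>{x\<in>V. f x \<noteq> 0}. cnj (f x) * g x)"

end

theory Submission
  imports Defs "HOL-Library.Discrete_Functions"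
begin

text \<open>The vertices are grouped into blocks \<open>B\<^sub>n\<close> of \<open>2^(n+1)\<close> consecutive numbers; each block
  carries the complete bipartite graph between its even and its odd members, and consecutive
  numbers are joined. A vertex of \<open>B\<^sub>n\<close> has degree at least \<open>2^n\<close>, but at most two of its edges
  leave the block, so a function that is constant on blocks has energy at most \<open>4\<parallel>f\<parallel>\<^sup>2\<close>.
  Hence \<open>w = 2^(-n)\<close> on \<open>B\<^sub>n\<close> lies in the form domain (its block truncations converge in the form
  norm), while \<open>\<Sum> d |w|\<^sup>2 \<ge> \<Sum>\<^sub>x 1/(x+1) = \<infinity>\<close>. Likewise the indicator of \<open>B\<^sub>n\<close> has energy at
  most \<open>2|B\<^sub>n|\<close> but \<open>\<langle>f, d f\<rangle> \<ge> 2^n |B\<^sub>n|\<close>, which rules out any form comparison.\<close>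

lemma infsum_cmult_left_ennreal:
  fixes f :: "'a \<Rightarrow> ennreal"
  shows "(\<Sum>\<^sub>\<infinity>x\<in>A. c * f x) = c * (\<Sum>\<^sub>\<infinity>x\<in>A. f x)"
  by (simp add: nonneg_infsum_complete SUP_mult_left_ennreal sum_distrib_left)

lemma infsum_UNIV_nat_ennreal:
  fixes a :: "nat \<Rightarrow> ennreal"
  shows "(\<Sum>\<^sub>\<infinity>x\<in>UNIV. a x) = (\<Sum>x. a x)"
proof -
  have "(a has_sum infsum a UNIV) UNIV" by (rule has_sum_infsum) (simp add: nonneg_summable_on_complete)
  then have "a sums infsum a UNIV" by (rule has_sum_imp_sums)
  then show ?thesis by (simp add: sums_iff)
qed

lemma summable_if_infsum_ennreal_finite:
  fixes r :: "nat \<Rightarrow> real"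
  assumes "\<And>x. 0 \<le> r x" and "(\<Sum>\<^sub>\<infinity>x\<in>UNIV. ennreal (r x)) < \<infinity>"
  shows "summable r"
  using assms summable_suminf_not_top by (fastforce simp: infsum_UNIV_nat_ennreal)

lemma infsum_ennreal_tail_tendsto_0:
  fixes r :: "nat \<Rightarrow> real"
  assumes nonneg: "\<And>x. 0 \<le> r x" and fin: "(\<Sum>\<^sub>\<infinity>x\<in>UNIV. ennreal (r x)) < \<infinity>"
  shows "(\<lambda>n. \<Sum>\<^sub>\<infinity>x\<in>UNIV. ennreal (if x < n then 0 else r x)) \<longlonglongrightarrow> 0"
proof -
  have r: "summable r" using assms by (rule summable_if_infsum_ennreal_finite)
  have tail: "(\<Sum>\<^sub>\<infinity>x\<in>UNIV. ennreal (if x < n then 0 else r x)) = ennreal (suminf r - (\<Sum>i<n. r i))"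
    for n
  proof -
    have head: "(\<lambda>i. if i < n then r i else 0) sums (\<Sum>i<n. r i)"
      using sums_If_finite_set[of "{..<n}" r] by simp
    have "(\<lambda>i. if i < n then 0 else r i) sums (suminf r - (\<Sum>i<n. r i))"
      using sums_diff[OF summable_sums[OF r] head] by (simp add: if_distrib cong: if_cong)
    then show ?thesis
      by (simp add: infsum_UNIV_nat_ennreal suminf_ennreal_eq nonneg sums_iff)
  qed
  have "(\<lambda>n. suminf r - (\<Sum>i<n. r i)) \<longlonglongrightarrow> suminf r - suminf r"
    by (intro tendsto_intros summable_LIMSEQ r)
  then show ?thesis
    unfolding tail by (intro tendsto_ennrealI[of _ 0, simplified]) simp
qed

lemma ennreal_tendsto_0_if_le:
  fixes q g :: "nat \<Rightarrow> ennreal"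
  assumes "\<And>n. q n \<le> g n" and "g \<longlonglongrightarrow> 0"
  shows "q \<longlonglongrightarrow> 0"
  by (rule tendsto_sandwich[OF _ _ tendsto_const assms(2)]) (simp_all add: assms(1))

lemma l2norm_sq_finite: "l2 UNIV f \<Longrightarrow> l2norm_sq UNIV f < \<infinity>"
proof -
  assume "l2 UNIV f"
  then have "summable (\<lambda>x. (cmod (f x))\<^sup>2)"
    by (simp add: l2_def summable_on_imp_summable)
  then have "(\<Sum>x. ennreal ((cmod (f x))\<^sup>2)) \<noteq> top"
    by (rule ennreal_suminf_neq_top) simp
  then show ?thesis
    by (simp add: l2norm_sq_def infsum_UNIV_nat_ennreal top.not_eq_extremum)
qed

section \<open>The energy form of a locally finite graph\<close>

lemma infsum_edges_fst_le_deg: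
  assumes fin: "\<And>x. finite {y. E x y}"
  shows "(\<Sum>\<^sub>\<infinity>p\<in>{(x, y). E x y}. g (fst p)) \<le> (\<Sum>\<^sub>\<infinity>x\<in>UNIV. of_nat (deg E x) * (g x :: ennreal))"
proof -
  have "sum (\<lambda>p. g (fst p)) F \<le> (\<Sum>\<^sub>\<infinity>x\<in>UNIV. of_nat (deg E x) * g x)"
    if F: "finite F" "F \<subseteq> {(x, y). E x y}" for F
  proof -
    let ?S = "Sigma (fst ` F) (\<lambda>x. {y. E x y})"
    have "sum (\<lambda>p. g (fst p)) F \<le> sum (\<lambda>p. g (fst p)) ?S"
      using F fin by (intro sum_mono2 finite_SigmaI) force+
    also have "\<dots> = (\<Sum>x\<in>fst ` F. \<Sum>y\<in>{y. E x y}. g x)"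
    proof -
      have "(\<Sum>x\<in>fst ` F. \<Sum>y\<in>{y. E x y}. g x) = (\<Sum>(x, y)\<in>?S. g x)"
        using F fin by (intro sum.Sigma) auto
      then show ?thesis by (simp add: case_prod_unfold)
    qed
    also have "\<dots> = (\<Sum>x\<in>fst ` F. of_nat (deg E x) * g x)"
      by (simp add: deg_def)
    also have "\<dots> \<le> (\<Sum>\<^sub>\<infinity>x\<in>UNIV. of_nat (deg E x) * g x)"
      unfolding nonneg_infsum_complete[OF zero_le] using F by (intro SUP_upper) auto
    finally show ?thesis .
  qed
  then show ?thesis
    unfolding nonneg_infsum_complete[OF zero_le, of _ "{(x, y). E x y}"] by (auto intro: SUP_least)
qed

lemma cmod_diff_sq_le: "(cmod (a - b))\<^sup>2 \<le> 2 * ((cmod a)\<^sup>2 + (cmod b)\<^sup>2)"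
proof -
  have "(cmod (a - b))\<^sup>2 \<le> (cmod a + cmod b)\<^sup>2"
    by (rule power_mono[OF norm_triangle_ineq4]) simp
  also have "\<dots> \<le> 2 * ((cmod a)\<^sup>2 + (cmod b)\<^sup>2)"
    using zero_le_power2[of "cmod a - cmod b"] unfolding power2_sum power2_diff distrib_left by linarith
  finally show ?thesis .
qed

lemma qform_le_deg:
  assumes sym: "\<And>x y. E x y \<Longrightarrow> E y x" and fin: "\<And>x. finite {y. E x y}"
  shows "qform E h \<le> 2 * (\<Sum>\<^sub>\<infinity>x\<in>UNIV. ennreal (real (deg E x) * (cmod (h x))\<^sup>2))"
proof -
  let ?P = "{(x, y). E x y}"
  let ?g = "\<lambda>x. ennreal ((cmod (h x))\<^sup>2)"
  define S where "S = (\<Sum>\<^sub>\<infinity>p\<in>?P. ?g (fst p))"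
  have swap: "(\<Sum>\<^sub>\<infinity>p\<in>?P. ?g (snd p)) = S"
  proof -
    have "bij_betw prod.swap ?P ?P"
      by (rule bij_betwI[of _ _ _ prod.swap]) (auto intro: sym)
    then show ?thesis
      unfolding S_def using infsum_reindex_bij_betw[of prod.swap ?P ?P "\<lambda>p. ?g (fst p)"] by simp
  qed
  have "(\<Sum>\<^sub>\<infinity>p\<in>?P. ennreal ((cmod (h (fst p) - h (snd p)))\<^sup>2))
      \<le> (\<Sum>\<^sub>\<infinity>p\<in>?P. 2 * (?g (fst p) + ?g (snd p)))"
  proof (rule infsum_mono)
    fix p
    have "ennreal ((cmod (h (fst p) - h (snd p)))\<^sup>2)
        \<le> ennreal (2 * ((cmod (h (fst p)))\<^sup>2 + (cmod (h (snd p)))\<^sup>2))"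
      by (rule ennreal_leI[OF cmod_diff_sq_le])
    then show "ennreal ((cmod (h (fst p) - h (snd p)))\<^sup>2) \<le> 2 * (?g (fst p) + ?g (snd p))"
      by (simp add: ennreal_mult' ennreal_plus)
  qed (simp_all add: nonneg_summable_on_complete)
  also have "\<dots> = 2 * (S + S)"
  proof -
    have "(\<Sum>\<^sub>\<infinity>p\<in>?P. ?g (fst p) + ?g (snd p)) = S + (\<Sum>\<^sub>\<infinity>p\<in>?P. ?g (snd p))"
      unfolding S_def by (rule infsum_add) (simp_all add: nonneg_summable_on_complete)
    then show ?thesis by (simp only: infsum_cmult_left_ennreal swap)
  qed
  finally have "qform E h \<le> 2 * (S + S) / 2"
    unfolding qform_def by (rule divide_right_mono_ennreal)
  also have "\<dots> = S + S"
    by (subst mult.commute, rule ennreal_mult_divide_eq) simp_all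
  also have "\<dots> \<le> 2 * (\<Sum>\<^sub>\<infinity>x\<in>UNIV. ennreal (real (deg E x) * (cmod (h x))\<^sup>2))"
  proof -
    have "(\<Sum>\<^sub>\<infinity>x\<in>UNIV. of_nat (deg E x) * ?g x)
        = (\<Sum>\<^sub>\<infinity>x\<in>UNIV. ennreal (real (deg E x) * (cmod (h x))\<^sup>2))"
      by (simp add: ennreal_mult' ennreal_of_nat_eq_real_of_nat)
    with infsum_edges_fst_le_deg[of E ?g, OF fin]
    have "S \<le> (\<Sum>\<^sub>\<infinity>x\<in>UNIV. ennreal (real (deg E x) * (cmod (h x))\<^sup>2))"
      unfolding S_def by simp
    then show ?thesis unfolding mult_2 by (intro add_mono)
  qed
  finally show ?thesis .
qed

lemma qform_subgraph_eq:
  assumes sub: "\<And>x y. E' x y \<Longrightarrow> E x y" and const: "\<And>x y. E x y \<Longrightarrow> \<not> E' x y \<Longrightarrow> h x = h y"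
  shows "qform E h = qform E' h"
  unfolding qform_def
proof (rule arg_cong[where f="\<lambda>t. t / 2"], rule infsum_cong_neutral)
  fix p assume "p \<in> {(x, y). E x y} - {(x, y). E' x y}"
  then have "h (fst p) = h (snd p)" by (intro const) auto
  then show "ennreal ((cmod (h (fst p) - h (snd p)))\<^sup>2) = 0" by simp
qed (use sub in auto)

section \<open>The block graph\<close>

text \<open>Block \<open>n\<close> is the interval \<open>[2^(n+1) - 2, 2^(n+2) - 2)\<close>.\<close>
definition block :: "nat \<Rightarrow> nat" where
  "block x = floor_log (x div 2 + 1)"

lemma two_pow_block_le: "2 ^ block x \<le> x div 2 + 1"
  unfolding block_def by (rule floor_log_exp2_le) simp

lemma less_two_pow_Suc_block: "x div 2 + 1 < 2 * 2 ^ block x"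
  unfolding block_def by (rule floor_log_exp2_gt)

lemma block_eqI: "2 ^ n \<le> x div 2 + 1 \<Longrightarrow> x div 2 + 1 < 2 * 2 ^ n \<Longrightarrow> block x = n"
  unfolding block_def by (rule floor_log_eqI) auto

lemma less_four_pow_block: "x < 4 * 2 ^ block x"
  using less_two_pow_Suc_block[of x] by linarith

lemma block_less: "x < n \<Longrightarrow> block x < n"
proof -
  assume "x < n"
  have "2 ^ block x \<le> x div 2 + 1" by (rule two_pow_block_le)
  also have "\<dots> \<le> n" using \<open>x < n\<close> by linarith
  also have "n < 2 ^ n" by (rule less_exp)
  finally show ?thesis by (simp add: power_strict_increasing_iff)
qed

lemma finite_block_less: "finite {x. block x < n}"
proof (rule finite_subset)
  show "{x. block x < n} \<subseteq> {..< 4 * 2 ^ n}"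
  proof
    fix x assume "x \<in> {x. block x < n}"
    then have "4 * 2 ^ block x \<le> (4::nat) * 2 ^ n" by (simp add: power_increasing)
    with less_four_pow_block[of x] show "x \<in> {..< 4 * 2 ^ n}" by (simp only: lessThan_iff)
  qed
qed simp

lemma finite_block: "finite {x. block x = n}"
  by (rule finite_subset[OF _ finite_block_less[of "Suc n"]]) auto

lemma block_first: "block (2 * (2 ^ n - 1)) = n"
proof -
  have "(1::nat) \<le> 2 ^ n" by simp
  then show ?thesis by (intro block_eqI) auto
qed

definition K :: "nat \<Rightarrow> nat \<Rightarrow> bool" where
  "K x y \<longleftrightarrow> odd (x + y) \<and> (block x = block y \<or> y = Suc x \<or> x = Suc y)"

lemma K_sym: "K x y \<longleftrightarrow> K y x"
  unfolding K_def by (auto simp: add.commute)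

lemma K_irrefl: "\<not> K x x"
  unfolding K_def by simp

lemma K_Suc: "K x (Suc x)"
  unfolding K_def by auto

lemma finite_K_neighbours: "finite {y. K x y}"
proof (rule finite_subset)
  show "{y. K x y} \<subseteq> {y. block y < Suc (block x)} \<union> {Suc x, x - 1}"
    by (auto simp: K_def)
qed (use finite_block_less in auto)

lemma K_rtrancl: "(x, y) \<in> {(u, v). K u v}\<^sup>*"
proof -
  have step: "(m, m + k) \<in> {(u, v). K u v}\<^sup>* \<and> (m + k, m) \<in> {(u, v). K u v}\<^sup>*" for m k
  proof (induction k)
    case (Suc k)
    have "(m + k, m + Suc k) \<in> {(u, v). K u v}" "(m + Suc k, m + k) \<in> {(u, v). K u v}"
      using K_Suc K_sym by simp_all
    with Suc show ?case by (meson converse_rtrancl_into_rtrancl rtrancl.rtrancl_into_rtrancl)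
  qed simp
  show ?thesis
    using step[of x "y - x"] step[of y "x - y"] by (cases "x \<le> y") simp_all
qed

lemma simple_graph_K: "simple_graph UNIV K"
  unfolding simple_graph_def using K_sym K_irrefl finite_K_neighbours K_rtrancl by blast

lemma bipartite_K: "bipartite UNIV K"
  unfolding bipartite_def
  by (intro exI[of _ "{x. even x}"] exI[of _ "{x. odd x}"]) (auto simp: K_def)

lemma two_pow_block_le_deg_K: "2 ^ block x \<le> deg K x"
proof -
  define n where "n = block x"
  define p :: nat where "p = (if even x then 1 else 0)"
  define \<phi> where "\<phi> j = 2 * (2 ^ n - 1 + j) + p" for j
  have "\<phi> ` {..<2 ^ n} \<subseteq> {y. K x y}"
  proof
    fix y assume "y \<in> \<phi> ` {..<2 ^ n}"
    then obtain j where j: "j < 2 ^ n" "y = \<phi> j" by auto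
    have "p \<le> 1" by (simp add: p_def)
    then have "y div 2 = 2 ^ n - 1 + j" by (simp add: j \<phi>_def)
    moreover have "(1::nat) \<le> 2 ^ n" by simp
    ultimately have "y div 2 + 1 = 2 ^ n + j" by simp
    then have "block y = n" using j by (intro block_eqI) auto
    moreover have "odd (x + y)" by (cases "even x") (auto simp: j \<phi>_def p_def)
    ultimately show "y \<in> {y. K x y}" by (simp add: K_def n_def)
  qed
  moreover have "inj_on \<phi> {..<2 ^ n}" by (auto simp: inj_on_def \<phi>_def)
  ultimately have "card {..<(2::nat) ^ n} \<le> card {y. K x y}"
    using card_inj_on_le finite_K_neighbours by blast
  then show ?thesis by (simp add: deg_def n_def)
qed

definition K_cross :: "nat \<Rightarrow> nat \<Rightarrow> bool" where
  "K_cross x y \<longleftrightarrow> K x y \<and> block x \<noteq> block y"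

lemma K_cross_neighbours: "{y. K_cross x y} \<subseteq> {Suc x, x - 1}"
  unfolding K_cross_def K_def by auto

lemma deg_K_cross_le: "deg K_cross x \<le> 2"
proof -
  have "deg K_cross x \<le> card {Suc x, x - 1}"
    unfolding deg_def by (rule card_mono) (use K_cross_neighbours in auto)
  also have "\<dots> \<le> 2" by (simp add: card_insert_le_m1)
  finally show ?thesis .
qed

lemma qform_K_block_constant:
  assumes "\<And>x y. block x = block y \<Longrightarrow> h x = h y"
  shows "qform K h \<le> 4 * l2norm_sq UNIV h"
proof -
  have "qform K h = qform K_cross h"
  proof (rule qform_subgraph_eq)
    show "K_cross x y \<Longrightarrow> K x y" for x y by (simp add: K_cross_def)
    show "K x y \<Longrightarrow> \<not> K_cross x y \<Longrightarrow> h x = h y" for x y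
      by (rule assms) (simp add: K_cross_def)
  qed
  also have "\<dots> \<le> 2 * (\<Sum>\<^sub>\<infinity>x\<in>UNIV. ennreal (real (deg K_cross x) * (cmod (h x))\<^sup>2))"
  proof (rule qform_le_deg)
    show "K_cross x y \<Longrightarrow> K_cross y x" for x y by (simp add: K_cross_def K_sym[of x y])
    show "finite {y. K_cross x y}" for x by (rule finite_subset[OF K_cross_neighbours]) simp
  qed
  also have "\<dots> \<le> 2 * (\<Sum>\<^sub>\<infinity>x\<in>UNIV. 2 * ennreal ((cmod (h x))\<^sup>2))"
  proof (intro mult_left_mono infsum_mono)
    fix x
    have "real (deg K_cross x) * (cmod (h x))\<^sup>2 \<le> 2 * (cmod (h x))\<^sup>2"
      using deg_K_cross_le[of x] by (intro mult_right_mono) auto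
    then have "ennreal (real (deg K_cross x) * (cmod (h x))\<^sup>2) \<le> ennreal (2 * (cmod (h x))\<^sup>2)"
      by (rule ennreal_leI)
    then show "ennreal (real (deg K_cross x) * (cmod (h x))\<^sup>2) \<le> 2 * ennreal ((cmod (h x))\<^sup>2)"
      by (simp add: ennreal_mult')
  qed (simp_all add: nonneg_summable_on_complete)
  also have "\<dots> = 4 * l2norm_sq UNIV h"
    by (simp add: infsum_cmult_left_ennreal l2norm_sq_def mult.assoc[symmetric])
  finally show ?thesis .
qed

section \<open>Form domains\<close>

lemma infsum_block_tail_tendsto_0:
  fixes r :: "nat \<Rightarrow> real"
  assumes "\<And>x. 0 \<le> r x" and "(\<Sum>\<^sub>\<infinity>x\<in>UNIV. ennreal (r x)) < \<infinity>"
  shows "(\<lambda>n. \<Sum>\<^sub>\<infinity>x\<in>UNIV. ennreal (if block x < n then 0 else r x)) \<longlonglongrightarrow> 0"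
proof (rule ennreal_tendsto_0_if_le[OF _ infsum_ennreal_tail_tendsto_0[OF assms]])
  show "(\<Sum>\<^sub>\<infinity>x\<in>UNIV. ennreal (if block x < n then 0 else r x))
      \<le> (\<Sum>\<^sub>\<infinity>x\<in>UNIV. ennreal (if x < n then 0 else r x))" for n
    using block_less[of _ n] by (intro infsum_mono) (auto simp: nonneg_summable_on_complete)
qed

text \<open>Truncation at block boundaries (rather than at \<open>x < n\<close>) keeps block-constant functions
  block-constant, so that the energy of \<open>block_trunc n w - w\<close> is controlled by its \<open>\<ell>\<^sup>2\<close> norm.\<close>
definition block_trunc :: "nat \<Rightarrow> (nat \<Rightarrow> complex) \<Rightarrow> nat \<Rightarrow> complex" where
  "block_trunc n f x = (if block x < n then f x else 0)"

lemma fin_supp_block_trunc: "fin_supp UNIV (block_trunc n f)"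
  unfolding fin_supp_def block_trunc_def
  by (auto intro: finite_subset[OF _ finite_block_less[of n]] split: if_splits)

lemma cmod_block_trunc_diff_sq:
  "(cmod (block_trunc n f x - f x))\<^sup>2 = (if block x < n then 0 else (cmod (f x))\<^sup>2)"
  by (simp add: block_trunc_def)

lemma l2norm_sq_block_trunc_diff_tendsto_0:
  assumes "l2 UNIV f"
  shows "(\<lambda>n. l2norm_sq UNIV (block_trunc n f - f)) \<longlonglongrightarrow> 0"
  using infsum_block_tail_tendsto_0[of "\<lambda>x. (cmod (f x))\<^sup>2"] l2norm_sq_finite[OF assms]
  by (simp add: l2norm_sq_def cmod_block_trunc_diff_sq)

lemma lap_sqrt_dom_KI:
  assumes "l2 UNIV f" and "qform K f < \<infinity>"
    and "(\<lambda>n. qform K (block_trunc n f - f)) \<longlonglongrightarrow> 0"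
  shows "f \<in> lap_sqrt_dom UNIV K"
  unfolding lap_sqrt_dom_def mem_Collect_eq
  using assms fin_supp_block_trunc l2norm_sq_block_trunc_diff_tendsto_0[OF assms(1)]
  by (intro conjI exI[of _ "\<lambda>n. block_trunc n f"]) simp_all

lemma deg_sqrt_dom_subset_lap_sqrt_dom_K: "deg_sqrt_dom UNIV K \<subseteq> lap_sqrt_dom UNIV K"
proof
  fix f assume "f \<in> deg_sqrt_dom UNIV K"
  then have f: "l2 UNIV f"
    and fin: "(\<Sum>\<^sub>\<infinity>x\<in>UNIV. ennreal (real (deg K x) * (cmod (f x))\<^sup>2)) < \<infinity>"
    unfolding deg_sqrt_dom_def by simp_all
  have qform_le: "qform K h \<le> 2 * (\<Sum>\<^sub>\<infinity>x\<in>UNIV. ennreal (real (deg K x) * (cmod (h x))\<^sup>2))" for h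
    by (rule qform_le_deg) (simp_all add: K_sym finite_K_neighbours)
  define T where "T n = (\<Sum>\<^sub>\<infinity>x\<in>UNIV. ennreal (if block x < n then 0 else real (deg K x) * (cmod (f x))\<^sup>2))" for n
  have "qform K (block_trunc n f - f) \<le> 2 * T n" for n
  proof -
    have "(\<Sum>\<^sub>\<infinity>x\<in>UNIV. ennreal (real (deg K x) * (cmod ((block_trunc n f - f) x))\<^sup>2)) = T n"
      unfolding T_def by (intro infsum_cong) (simp add: cmod_block_trunc_diff_sq)
    with qform_le[of "block_trunc n f - f"] show ?thesis by simp
  qed
  moreover have "T \<longlonglongrightarrow> 0"
    unfolding T_def using fin by (intro infsum_block_tail_tendsto_0) simp_all
  then have "(\<lambda>n. 2 * T n) \<longlonglongrightarrow> 0"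
    using ennreal_tendsto_cmult[of 2 T 0] by simp
  ultimately have "(\<lambda>n. qform K (block_trunc n f - f)) \<longlonglongrightarrow> 0"
    by (rule ennreal_tendsto_0_if_le)
  moreover have "qform K f < \<infinity>"
    using qform_le[of f] fin by (simp add: ennreal_mult_less_top order.strict_trans1)
  ultimately show "f \<in> lap_sqrt_dom UNIV K"
    using f by (intro lap_sqrt_dom_KI)
qed

definition w :: "nat \<Rightarrow> complex" where
  "w x = of_real (inverse (2 ^ block x))"

lemma cmod_w: "cmod (w x) = inverse (2 ^ block x)"
  by (simp add: w_def norm_inverse norm_power)

lemma cmod_w_le: "cmod (w x) \<le> 4 / real (Suc x)"
proof -
  have "Suc x \<le> 4 * 2 ^ block x"
    using less_two_pow_Suc_block[of x] by linarith
  then have "real (Suc x) \<le> 4 * 2 ^ block x"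
    by (metis of_nat_le_iff of_nat_mult of_nat_numeral of_nat_power)
  then show ?thesis
    by (simp add: cmod_w field_simps)
qed

lemma l2_w: "l2 UNIV w"
proof -
  have "summable (\<lambda>n. inverse (real (Suc n) ^ 2))"
    using inverse_power_summable[of 2, where 'a=real]
    by (subst summable_Suc_iff[where f="\<lambda>n. inverse (real n ^ 2)"]) simp
  then have "summable (\<lambda>n. 16 * inverse (real (Suc n) ^ 2))"
    by (rule summable_mult)
  then have "summable (\<lambda>x. (cmod (w x))\<^sup>2)"
  proof (rule summable_comparison_test')
    show "norm ((cmod (w x))\<^sup>2) \<le> 16 * inverse (real (Suc x) ^ 2)" for x
      using power_mono[OF cmod_w_le[of x] norm_ge_zero, of 2]
      by (simp add: power_divide divide_inverse power_inverse)
  qed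
  then show ?thesis
    by (simp add: l2_def summable_on_UNIV_nonneg_real_iff)
qed

lemma w_in_lap_sqrt_dom_K: "w \<in> lap_sqrt_dom UNIV K"
proof (rule lap_sqrt_dom_KI)
  have "qform K w \<le> 4 * l2norm_sq UNIV w"
    by (rule qform_K_block_constant) (simp add: w_def)
  also have "\<dots> < \<infinity>"
    using l2norm_sq_finite[OF l2_w] by (simp add: ennreal_mult_less_top)
  finally show "qform K w < \<infinity>" .
  have "qform K (block_trunc n w - w) \<le> 4 * l2norm_sq UNIV (block_trunc n w - w)" for n
    by (rule qform_K_block_constant) (simp add: w_def block_trunc_def)
  moreover have "(\<lambda>n. 4 * l2norm_sq UNIV (block_trunc n w - w)) \<longlonglongrightarrow> 0"
    using ennreal_tendsto_cmult[OF _ l2norm_sq_block_trunc_diff_tendsto_0[OF l2_w], of 4] by simp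
  ultimately show "(\<lambda>n. qform K (block_trunc n w - w)) \<longlonglongrightarrow> 0"
    by (rule ennreal_tendsto_0_if_le)
qed (rule l2_w)

lemma w_notin_deg_sqrt_dom_K: "w \<notin> deg_sqrt_dom UNIV K"
proof
  assume "w \<in> deg_sqrt_dom UNIV K"
  then have fin: "(\<Sum>\<^sub>\<infinity>x\<in>UNIV. ennreal (real (deg K x) * (cmod (w x))\<^sup>2)) < \<infinity>"
    unfolding deg_sqrt_dom_def by simp
  have harmonic_le: "inverse (real (Suc x)) \<le> real (deg K x) * (cmod (w x))\<^sup>2" for x
  proof -
    have "2 ^ block x \<le> Suc x"
      using two_pow_block_le[of x] by linarith
    then have "2 ^ block x \<le> real (Suc x)"
      by (metis of_nat_le_iff of_nat_numeral of_nat_power)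
    then have "inverse (real (Suc x)) \<le> inverse (2 ^ block x)"
      by (intro le_imp_inverse_le) simp_all
    also have "\<dots> = 2 ^ block x * (inverse (2 ^ block x))\<^sup>2"
      by (simp add: power2_eq_square)
    also have "\<dots> \<le> real (deg K x) * (cmod (w x))\<^sup>2"
    proof -
      have "(2::real) ^ block x \<le> real (deg K x)"
        using two_pow_block_le_deg_K[of x] by (metis of_nat_le_iff of_nat_numeral of_nat_power)
      then show ?thesis by (simp add: cmod_w mult_right_mono)
    qed
    finally show ?thesis .
  qed
  have "(\<Sum>\<^sub>\<infinity>x\<in>UNIV. ennreal (inverse (real (Suc x))))
      \<le> (\<Sum>\<^sub>\<infinity>x\<in>UNIV. ennreal (real (deg K x) * (cmod (w x))\<^sup>2))"
    using harmonic_le by (intro infsum_mono ennreal_leI) (simp_all add: nonneg_summable_on_complete)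
  then have "summable (\<lambda>x. inverse (real (Suc x)))"
    using fin by (intro summable_if_infsum_ennreal_finite) simp_all
  then have "summable (\<lambda>n. inverse (of_nat n) :: real)"
    by (subst summable_Suc_iff[symmetric]) simp
  then show False
    using not_summable_harmonic by blast
qed

section \<open>Failure of the form comparison\<close>

definition block_indicator :: "nat \<Rightarrow> nat \<Rightarrow> complex" where
  "block_indicator n x = (if block x = n then 1 else 0)"

lemma fin_supp_block_indicator: "fin_supp UNIV (block_indicator n)"
  unfolding fin_supp_def block_indicator_def using finite_block by simp

lemma inner_fs_block_indicator:
  "inner_fs UNIV (block_indicator n) g = (\<Sum>x | block x = n. g x)"
  unfolding inner_fs_def block_indicator_def by (intro sum.cong) auto

lemma Re_lap_K_block_indicator_le:
  assumes "block x = n"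
  shows "Re (lap K (block_indicator n) x) \<le> 2"
proof -
  have "Re (lap K (block_indicator n) x) = (\<Sum>y | K x y. if K_cross x y then 1 else 0)"
    unfolding lap_def Re_sum using assms
    by (intro sum.cong) (auto simp: block_indicator_def K_cross_def)
  also have "\<dots> = real (deg K_cross x)"
    using finite_K_neighbours[of x]
    by (simp add: sum.If_cases deg_def K_cross_def Collect_conj_eq[symmetric] conj_commute)
  also have "\<dots> \<le> 2"
    using deg_K_cross_le[of x] by simp
  finally show ?thesis .
qed

lemma K_energy_not_bounded_below_by_deg:
  assumes "a < 1"
  shows "\<exists>f. fin_supp UNIV f \<and> Re (inner_fs UNIV f (lap K f)) <
    (1 - a) * Re (inner_fs UNIV f (\<lambda>x. of_nat (deg K x) * f x)) - C * Re (inner_fs UNIV f f)"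
proof -
  obtain n :: nat where n: "(C + 2) / (1 - a) < 2 ^ n"
    using real_arch_pow[of 2 "(C + 2) / (1 - a)"] by auto
  define S where "S = {x. block x = n}"
  define f where "f = block_indicator n"
  have "finite S" "S \<noteq> {}"
    unfolding S_def using finite_block block_first by auto
  then have S: "0 < real (card S)" by (simp add: card_gt_0_iff)
  have "Re (inner_fs UNIV f (lap K f)) \<le> 2 * real (card S)"
  proof -
    have "Re (inner_fs UNIV f (lap K f)) = (\<Sum>x\<in>S. Re (lap K f x))"
      unfolding f_def S_def inner_fs_block_indicator by simp
    also have "\<dots> \<le> (\<Sum>x\<in>S. 2)"
      unfolding f_def S_def by (intro sum_mono Re_lap_K_block_indicator_le) simp
    finally show ?thesis by simp
  qed
  also have "\<dots> < ((1 - a) * 2 ^ n - C) * card S"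
  proof -
    have "C + 2 < (1 - a) * 2 ^ n"
      using n assms by (simp add: pos_divide_less_eq mult.commute)
    then show ?thesis
      using S by (intro mult_strict_right_mono) auto
  qed
  also have "\<dots> \<le> (1 - a) * Re (inner_fs UNIV f (\<lambda>x. of_nat (deg K x) * f x)) - C * Re (inner_fs UNIV f f)"
  proof -
    have "(\<Sum>x\<in>S. (2::real) ^ n) \<le> (\<Sum>x\<in>S. real (deg K x))"
    proof (rule sum_mono)
      fix x assume "x \<in> S"
      then have "2 ^ n \<le> deg K x"
        using two_pow_block_le_deg_K[of x] by (simp add: S_def)
      then show "(2::real) ^ n \<le> real (deg K x)"
        by (metis of_nat_le_iff of_nat_numeral of_nat_power)
    qed
    then have "(1 - a) * (2 ^ n * card S) \<le> (1 - a) * (\<Sum>x\<in>S. real (deg K x))"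
      using assms by (intro mult_left_mono) (simp_all add: mult.commute)
    moreover have "Re (inner_fs UNIV f (\<lambda>x. of_nat (deg K x) * f x)) = (\<Sum>x\<in>S. real (deg K x))"
      "Re (inner_fs UNIV f f) = card S"
      unfolding f_def S_def inner_fs_block_indicator by (simp_all add: block_indicator_def)
    ultimately show ?thesis by (simp add: algebra_simps)
  qed
  finally show ?thesis
    using fin_supp_block_indicator unfolding f_def by blast
qed

theorem proposition4p11:
  shows "\<exists>V E. simple_graph V E \<and> bipartite V E \<and>
           deg_sqrt_dom V E \<subset> lap_sqrt_dom V E \<and>
           \<not> (\<exists>a C. 0 < a \<and> a < (1::real) \<and> 0 \<le> C \<and>
                (\<forall>f. fin_supp V f \<longrightarrow>
                   (1 - a) * Re (inner_fs V f (\<lambda>x. of_nat (deg E x) * f x))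
                     - C * Re (inner_fs V f f) \<le> Re (inner_fs V f (lap E f)) \<and>
                   Re (inner_fs V f (lap E f)) \<le>
                     (1 + a) * Re (inner_fs V f (\<lambda>x. of_nat (deg E x) * f x))
                     + C * Re (inner_fs V f f)))"
proof (intro exI[of _ UNIV] exI[of _ K] conjI simple_graph_K bipartite_K)
  show "deg_sqrt_dom UNIV K \<subset> lap_sqrt_dom UNIV K"
    using deg_sqrt_dom_subset_lap_sqrt_dom_K w_in_lap_sqrt_dom_K w_notin_deg_sqrt_dom_K by blast
qed (use K_energy_not_bounded_below_by_deg in \<open>meson not_le\<close>)

end
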